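(* Let $\phi,\psi$ be Drinfeld modules over $K$ with $n=\operatorname{rk}\phi>\operatorname{rk}\psi$. Identify $\operatorname{Ext}^1_\tau(\phi,\psi)$ with $K^n$ via $(c_0,\dots,c_{n-1})\mapsto$ the class of the biderivation $\delta$ with $\delta(t)=\sum_{i=0}^{n-1}c_i\tau^i$ (this is a bijection). Then $\operatorname{Ext}^1_\tau(\phi,\psi)$ has a natural structure of a $\mathbf t$-module: there is a $\mathbf t$-module $\Pi:\mathbb F_q[t]\to\mathrm{Mat}_n(K\{\tau\})$ such that for every $c\in K^n$, multiplication by $t$ on $\operatorname{Ext}^1_\tau(\phi,\psi)$ sends the class corresponding to $c$ to the class corresponding to $\Pi_t(c)$ (evaluation, $\tau$ acting coordinatewise as $x\mapsto x^q$), and $\Pi_t$ has the block form $$\Pi_t=\begin{bmatrix}\theta&0&\cdots&0\\ \delta_1&&&\\ \vdots&&\Pi^0_t&\\ \delta_{n-1}&&&\end{bmatrix}$$ with $\delta_1,\dots,\delta_{n-1}\in K\{\tau\}$ and $\Pi^0_t\in\mathrm{Mat}_{n-1}(K\{\tau\})$.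
   Context: $A=\mathbb F_q[t]$, $K$ a field of characteristic $p$ with an $\mathbb F_q$-algebra map $\iota:A\to K$, $\theta=\iota(t)$; $K\{\tau\}$ is the ring of twisted polynomials with $\tau x=x^q\tau$. A $\mathbf t$-module of dimension $d$ is an $\mathbb F_q$-algebra homomorphism $\Phi:\mathbb F_q[t]\to\mathrm{Mat}_d(K\{\tau\})$ with $\Phi_t=(\theta I_d+N)+\sum_{i\ge1}M_i\tau^i$, $N$ nilpotent, $M_i\in\mathrm{Mat}_d(K)$; rank $=\deg_\tau\Phi_t$. A Drinfeld module is a $\mathbf t$-module of dimension 1. $\mathrm{Der}(\phi,\psi)$ is the space of $\mathbb F_q$-linear $\delta:\mathbb F_q[t]\to K\{\tau\}$ with $\delta(ab)=\psi_a\delta(b)+\delta(a)\phi_b$ (determined by $\delta(t)$, which can be arbitrary); inner biderivations are $\delta^{(U)}(a)=U\phi_a-\psi_aU$, $U\in K\{\tau\}$. $\operatorname{Ext}^1_\tau(\phi,\psi)$ is identified with $\mathrm{Der}(\phi,\psi)/\mathrm{Der}_{in}(\phi,\psi)$ with $\mathbb F_q[t]$-module structure $a*[\delta]=[\psi_a\delta]$. *)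

theory Defs
  imports "HOL-Computational_Algebra.Polynomial"
begin

text \<open>An element of K{tau} is stored as a polynomial whose i-th coefficient is the
coefficient of tau^i.  Addition is coefficientwise; multiplication is twisted by
tau x = x^q tau.\<close>

definition tmul :: "nat \<Rightarrow> 'k::field poly \<Rightarrow> 'k poly \<Rightarrow> 'k poly" where
  "tmul q f g = (\<Sum>i\<le>degree f. \<Sum>j\<le>degree g. monom (coeff f i * coeff g j ^ (q ^ i)) (i + j))"

fun tpow :: "nat \<Rightarrow> 'k::field poly \<Rightarrow> nat \<Rightarrow> 'k poly" where
  "tpow q f 0 = 1"
| "tpow q f (Suc m) = tmul q f (tpow q f m)"

definition tp_eval :: "nat \<Rightarrow> 'k::field poly \<Rightarrow> 'k \<Rightarrow> 'k" where
  "tp_eval q f x = (\<Sum>i\<le>degree f. coeff f i * x ^ (q ^ i))"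

definition Fq :: "nat \<Rightarrow> 'k::field set" where
  "Fq q = {x. x ^ q = x}"

text \<open>A = F_q[t], realised as polynomials (in t) over K with coefficients in F_q.\<close>
definition Aring :: "nat \<Rightarrow> 'k::field poly set" where
  "Aring q = {a. \<forall>i. coeff a i \<in> Fq q}"

definition kmatmul :: "nat \<Rightarrow> (nat \<Rightarrow> nat \<Rightarrow> 'k::field) \<Rightarrow> (nat \<Rightarrow> nat \<Rightarrow> 'k) \<Rightarrow> nat \<Rightarrow> nat \<Rightarrow> 'k" where
  "kmatmul d X Y = (\<lambda>i j. \<Sum>k<d. X i k * Y k j)"

fun kmatpow :: "nat \<Rightarrow> (nat \<Rightarrow> nat \<Rightarrow> 'k::field) \<Rightarrow> nat \<Rightarrow> nat \<Rightarrow> nat \<Rightarrow> 'k" where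
  "kmatpow d X 0 = (\<lambda>i j. if i = j then 1 else 0)"
| "kmatpow d X (Suc m) = kmatmul d X (kmatpow d X m)"

definition nilpotent_mat :: "nat \<Rightarrow> (nat \<Rightarrow> nat \<Rightarrow> 'k::field) \<Rightarrow> bool" where
  "nilpotent_mat d N \<longleftrightarrow> (\<exists>m. \<forall>i<d. \<forall>j<d. kmatpow d N m i j = 0)"

text \<open>A t-module of dimension d is the F_q-algebra homomorphism F_q[t] -> Mat_d(K{tau})
determined by its value Phi_t (F_q[t] is free on t); we record Phi_t as a d x d
matrix of twisted polynomials.\<close>
definition t_module :: "'k::field \<Rightarrow> nat \<Rightarrow> (nat \<Rightarrow> nat \<Rightarrow> 'k poly) \<Rightarrow> bool" where
  "t_module \<theta> d M \<longleftrightarrow> (\<exists>N. nilpotent_mat d N \<and>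
      (\<forall>i<d. \<forall>j<d. coeff (M i j) 0 = (if i = j then \<theta> else 0) + N i j))"

definition t_rank :: "nat \<Rightarrow> (nat \<Rightarrow> nat \<Rightarrow> 'k::zero poly) \<Rightarrow> nat" where
  "t_rank d M = Max (insert 0 {degree (M i j) | i j. i < d \<and> j < d})"

definition drinfeld_module :: "'k::field \<Rightarrow> 'k poly \<Rightarrow> bool" where
  "drinfeld_module \<theta> \<phi>t \<longleftrightarrow> t_module \<theta> 1 (\<lambda>_ _. \<phi>t)"

definition drinfeld_rank :: "'k::field poly \<Rightarrow> nat" where
  "drinfeld_rank \<phi>t = t_rank 1 (\<lambda>_ _. \<phi>t)"

definition dm_eval :: "nat \<Rightarrow> 'k::field poly \<Rightarrow> 'k poly \<Rightarrow> 'k poly" where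
  "dm_eval q \<phi>t a = (\<Sum>i\<le>degree a. smult (coeff a i) (tpow q \<phi>t i))"

definition biderivation :: "nat \<Rightarrow> 'k::field poly \<Rightarrow> 'k poly \<Rightarrow> ('k poly \<Rightarrow> 'k poly) \<Rightarrow> bool" where
  "biderivation q \<phi>t \<psi>t \<delta> \<longleftrightarrow>
     (\<forall>a\<in>Aring q. \<forall>b\<in>Aring q. \<delta> (a + b) = \<delta> a + \<delta> b) \<and>
     (\<forall>c\<in>Fq q. \<forall>a\<in>Aring q. \<delta> (smult c a) = smult c (\<delta> a)) \<and>
     (\<forall>a\<in>Aring q. \<forall>b\<in>Aring q.
        \<delta> (a * b) = tmul q (dm_eval q \<psi>t a) (\<delta> b) + tmul q (\<delta> a) (dm_eval q \<phi>t b))"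

definition inner_biderivation :: "nat \<Rightarrow> 'k::field poly \<Rightarrow> 'k poly \<Rightarrow> ('k poly \<Rightarrow> 'k poly) \<Rightarrow> bool" where
  "inner_biderivation q \<phi>t \<psi>t \<delta> \<longleftrightarrow>
     (\<exists>U. \<forall>a\<in>Aring q. \<delta> a = tmul q U (dm_eval q \<phi>t a) - tmul q (dm_eval q \<psi>t a) U)"

definition ext_eq :: "nat \<Rightarrow> 'k::field poly \<Rightarrow> 'k poly \<Rightarrow> ('k poly \<Rightarrow> 'k poly) \<Rightarrow> ('k poly \<Rightarrow> 'k poly) \<Rightarrow> bool" where
  "ext_eq q \<phi>t \<psi>t \<delta> \<delta>' \<longleftrightarrow> inner_biderivation q \<phi>t \<psi>t (\<lambda>a. \<delta> a - \<delta>' a)"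

definition ext_smul :: "nat \<Rightarrow> 'k::field poly \<Rightarrow> 'k poly \<Rightarrow> ('k poly \<Rightarrow> 'k poly) \<Rightarrow> ('k poly \<Rightarrow> 'k poly)" where
  "ext_smul q \<psi>t a \<delta> = (\<lambda>b. tmul q (dm_eval q \<psi>t a) (\<delta> b))"

definition tau_vec :: "nat \<Rightarrow> (nat \<Rightarrow> 'k::comm_monoid_add) \<Rightarrow> 'k poly" where
  "tau_vec n c = (\<Sum>i<n. monom (c i) i)"

definition mat_tp_eval :: "nat \<Rightarrow> nat \<Rightarrow> (nat \<Rightarrow> nat \<Rightarrow> 'k::field poly) \<Rightarrow> (nat \<Rightarrow> 'k) \<Rightarrow> nat \<Rightarrow> 'k" where
  "mat_tp_eval q d P c = (\<lambda>i. \<Sum>j<d. tp_eval q (P i j) (c j))"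

end

(*
  A biderivation is determined by its value at t, and any value can be prescribed, so
  Ext^1(phi, psi) is K{tau} modulo the values U phi_t - psi_t U of inner biderivations.
  Because deg psi_t < deg phi_t = n, the top coefficient of U phi_t - psi_t U is that of
  U phi_t, which gives a division algorithm: every class has exactly one representative
  of tau-degree < n.  Multiplication by t sends the class of sum c_i tau^i to that of
  psi_t * sum c_i tau^i; cancelling its top coefficients one at a time by inner values
  (u tau^s) phi_t - psi_t (u tau^s) only involves K-linear combinations of q-power twists
  of the c_i, so the reduced coordinates are given by a matrix Pi_t over K{tau}.  Its
  constant terms stay theta I and its first row stays (theta, 0, ..., 0) since phi_t and
  psi_t share the constant term theta.
*)

theory Submission
  imports Defs "HOL-Computational_Algebra.Primes"
begin

definition lin_ext :: "(nat \<Rightarrow> 'a::comm_semiring_1 poly) \<Rightarrow> 'a poly \<Rightarrow> 'a poly" where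
  "lin_ext E a = (\<Sum>i\<le>degree a. smult (coeff a i) (E i))"

lemma lin_ext_eq_sum: "degree a < N \<Longrightarrow> lin_ext E a = (\<Sum>i<N. smult (coeff a i) (E i))"
  unfolding lin_ext_def by (rule sum.mono_neutral_left) (auto simp: coeff_eq_0)

lemma lin_ext_add: "lin_ext E (a + b) = lin_ext E a + lin_ext E b"
proof -
  define N where "N = Suc (max (degree a) (degree b))"
  have "degree (a + b) < N" using degree_add_le_max[of a b] by (simp add: N_def)
  then show ?thesis
    by (simp add: lin_ext_eq_sum[of a N] lin_ext_eq_sum[of b N] lin_ext_eq_sum[of "a + b" N]
        N_def sum.distrib smult_add_left)
qed

lemma lin_ext_smult: "lin_ext E (smult c a) = smult c (lin_ext E a)"
proof -
  have smult_sum: "smult c (\<Sum>i<N. g i) = (\<Sum>i<N. smult c (g i))" for g and N :: nat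
    by (induction N) (simp_all add: smult_add_right)
  have "degree (smult c a) < Suc (degree a)" using degree_smult_le[of c a] by simp
  then show ?thesis
    by (simp add: lin_ext_eq_sum[of _ "Suc (degree a)"] smult_sum del: sum.lessThan_Suc)
qed

lemma lin_ext_zero [simp]: "lin_ext E 0 = 0"
  by (simp add: lin_ext_def)

lemma lin_ext_pCons: "lin_ext E (pCons c a) = smult c (E 0) + lin_ext (\<lambda>i. E (Suc i)) a"
proof -
  have "degree (pCons c a) < Suc (Suc (degree a))"
    by (simp add: degree_pCons_eq_if)
  then have "lin_ext E (pCons c a)
      = smult c (E 0) + (\<Sum>i<Suc (degree a). smult (coeff a i) (E (Suc i)))"
    by (simp add: lin_ext_eq_sum sum.lessThan_Suc_shift del: sum.lessThan_Suc)
  then show ?thesis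
    by (simp add: lin_ext_eq_sum[of a "Suc (degree a)"] del: sum.lessThan_Suc)
qed

lemma lin_ext_t [simp]: "lin_ext E [:0, 1:] = E 1"
  by (simp add: lin_ext_pCons)

lemma lin_ext_const: "lin_ext E [:c:] = smult c (E 0)"
  by (simp add: lin_ext_pCons)

lemma lin_ext_add_fun: "lin_ext (\<lambda>i. E i + E' i) a = lin_ext E a + lin_ext E' a"
  by (simp add: lin_ext_def smult_add_right sum.distrib)

lemma dm_eval_eq_lin_ext: "dm_eval q \<phi> a = lin_ext (tpow q \<phi>) a"
  by (simp add: dm_eval_def lin_ext_def)

lemma coeff_tau_vec: "coeff (tau_vec n c) i = (if i < n then c i else 0)"
  by (simp add: tau_vec_def coeff_sum coeff_monom)

lemma tau_vec_coeff: "degree p < n \<Longrightarrow> tau_vec n (coeff p) = p"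
  by (rule poly_eqI) (auto simp: coeff_tau_vec coeff_eq_0)

lemma degree_tau_vec_less: "0 < n \<Longrightarrow> degree (tau_vec n c) < n"
  by (rule degree_lessI) (auto simp: coeff_tau_vec)

lemma tp_eval_eq_sum: "degree p < N \<Longrightarrow> tp_eval q p x = (\<Sum>i<N. coeff p i * x ^ (q ^ i))"
  unfolding tp_eval_def by (rule sum.mono_neutral_left) (auto simp: coeff_eq_0)

lemma tp_eval_zero [simp]: "tp_eval q 0 x = 0"
  by (simp add: tp_eval_def)

lemma tp_eval_add: "tp_eval q (p + p') x = tp_eval q p x + tp_eval q p' x"
proof -
  define N where "N = Suc (max (degree p) (degree p'))"
  have "degree (p + p') < N" using degree_add_le_max[of p p'] by (simp add: N_def)
  then show ?thesis
    by (simp add: tp_eval_eq_sum[of p N] tp_eval_eq_sum[of p' N] tp_eval_eq_sum[of "p + p'" N]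
        N_def sum.distrib algebra_simps del: sum.lessThan_Suc)
qed

lemma tp_eval_diff: "tp_eval q (p - p') x = tp_eval q p x - tp_eval q p' x"
proof -
  define N where "N = Suc (max (degree p) (degree p'))"
  have "degree (p - p') < N" using degree_diff_le_max[of p p'] by (simp add: N_def)
  then show ?thesis
    by (simp add: tp_eval_eq_sum[of p N] tp_eval_eq_sum[of p' N] tp_eval_eq_sum[of "p - p'" N]
        N_def sum_subtractf algebra_simps del: sum.lessThan_Suc)
qed

lemma tp_eval_smult: "tp_eval q (smult a p) x = a * tp_eval q p x"
proof -
  have "degree (smult a p) < Suc (degree p)" using degree_smult_le[of a p] by simp
  then show ?thesis
    by (simp add: tp_eval_eq_sum[of _ "Suc (degree p)"] sum_distrib_left algebra_simps
        del: sum.lessThan_Suc)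
qed

lemma tp_eval_monom: "tp_eval q (monom b l) x = b * x ^ (q ^ l)"
proof -
  have "tp_eval q (monom b l) x = (\<Sum>i<Suc l. coeff (monom b l) i * x ^ (q ^ i))"
    by (rule tp_eval_eq_sum) (simp add: le_less_trans[OF degree_monom_le])
  also have "\<dots> = (\<Sum>i<Suc l. if i = l then b * x ^ (q ^ l) else 0)"
    by (rule sum.cong) (auto simp: coeff_monom)
  finally show ?thesis by simp
qed

definition left_mult_matrix :: "'a::zero poly \<Rightarrow> nat \<Rightarrow> nat \<Rightarrow> 'a poly" where
  "left_mult_matrix f k j = (if j \<le> k then monom (coeff f (k - j)) (k - j) else 0)"

section \<open>Multiplication in \<open>K{\<tau>}\<close>\<close>

locale twisted_poly =
  fixes q :: nat
  assumes power_q_add: "\<And>x y :: 'k::field. (x + y) ^ q = x ^ q + y ^ q"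
begin

abbreviation twisted_mult :: "'k poly \<Rightarrow> 'k poly \<Rightarrow> 'k poly" (infixl "\<star>" 70) where
  "f \<star> g \<equiv> tmul q f g"

lemma q_pos [simp]: "q > 0"
proof (rule ccontr)
  assume "\<not> q > 0"
  then have "(1::'k) = 1 + 1" using power_q_add[of 0 0] by simp
  then show False by (metis add_cancel_left_right one_neq_zero)
qed

lemma frobenius_add: "((x::'k) + y) ^ (q ^ i) = x ^ (q ^ i) + y ^ (q ^ i)"
  by (induction i arbitrary: x y) (simp_all add: power_mult power_q_add)

lemma zero_power_q_power [simp]: "(0::'k) ^ (q ^ i) = 0"
  using q_pos by simp

lemma frobenius_sum: "(sum (f :: _ \<Rightarrow> 'k) S) ^ (q ^ i) = (\<Sum>x\<in>S. f x ^ (q ^ i))"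
  by (induction S rule: infinite_finite_induct) (simp_all add: frobenius_add)

lemma frobenius_minus: "(- (x::'k)) ^ (q ^ i) = - (x ^ (q ^ i))"
  using frobenius_add[of x "- x" i] by (simp add: eq_neg_iff_add_eq_0 add.commute)

lemma frobenius_Fq: "(c::'k) \<in> Fq q \<Longrightarrow> c ^ (q ^ i) = c"
  by (induction i) (simp_all add: Fq_def power_mult)

lemma coeff_tmul: "coeff (f \<star> g) k = (\<Sum>i\<le>k. coeff f i * coeff g (k - i) ^ (q ^ i))"
proof -
  have inner: "(\<Sum>j\<le>degree g. if i + j = k then coeff f i * coeff g j ^ (q ^ i) else 0)
      = (if i \<le> k then coeff f i * coeff g (k - i) ^ (q ^ i) else 0)" for i
  proof (cases "i \<le> k \<and> k - i \<le> degree g")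
    case True
    then have "(\<Sum>j\<le>degree g. if i + j = k then coeff f i * coeff g j ^ (q ^ i) else 0)
        = (\<Sum>j\<le>degree g. if j = k - i then coeff f i * coeff g j ^ (q ^ i) else 0)"
      by (intro sum.cong) auto
    with True show ?thesis by simp
  qed (auto simp: coeff_eq_0 intro!: sum.neutral)
  have "coeff (f \<star> g) k = (\<Sum>i\<le>degree f. if i \<le> k then coeff f i * coeff g (k - i) ^ (q ^ i) else 0)"
    by (simp add: tmul_def coeff_sum coeff_monom inner)
  also have "\<dots> = (\<Sum>i\<in>{..degree f} \<inter> {..k}. coeff f i * coeff g (k - i) ^ (q ^ i))"
    by (subst sum.inter_restrict) auto
  also have "\<dots> = (\<Sum>i\<le>k. coeff f i * coeff g (k - i) ^ (q ^ i))"
    by (rule sum.mono_neutral_left) (auto simp: coeff_eq_0)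
  finally show ?thesis .
qed

lemma tmul_add_left: "(f + g) \<star> h = f \<star> h + g \<star> h"
  by (rule poly_eqI) (simp add: coeff_tmul algebra_simps sum.distrib)

lemma tmul_add_right: "h \<star> (f + g) = h \<star> f + h \<star> g"
  by (rule poly_eqI) (simp add: coeff_tmul algebra_simps sum.distrib frobenius_add)

lemma tmul_zero_left [simp]: "0 \<star> f = 0"
  by (rule poly_eqI) (simp add: coeff_tmul)

lemma tmul_zero_right [simp]: "f \<star> 0 = 0"
  by (rule poly_eqI) (simp add: coeff_tmul)

lemma tmul_minus_left: "(- f) \<star> h = - (f \<star> h)"
  by (rule poly_eqI) (simp add: coeff_tmul sum_negf)

lemma tmul_minus_right: "h \<star> (- f) = - (h \<star> f)"
  by (rule poly_eqI) (simp add: coeff_tmul sum_negf frobenius_minus)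

lemma tmul_diff_left: "(f - g) \<star> h = f \<star> h - g \<star> h"
  using tmul_add_left[of f "- g" h] by (simp add: tmul_minus_left)

lemma tmul_diff_right: "h \<star> (f - g) = h \<star> f - h \<star> g"
  using tmul_add_right[of h f "- g"] by (simp add: tmul_minus_right)

lemma tmul_sum_right: "f \<star> (sum g S) = (\<Sum>x\<in>S. f \<star> g x)"
  by (induction S rule: infinite_finite_induct) (simp_all add: tmul_add_right)

lemma tmul_smult_right: "c \<in> Fq q \<Longrightarrow> f \<star> smult c g = smult c (f \<star> g)"
  by (rule poly_eqI)
     (simp add: coeff_tmul sum_distrib_left power_mult_distrib frobenius_Fq algebra_simps)

lemma coeff_tmul_monom_left:
  "coeff (monom u s \<star> g) k = (if s \<le> k then u * coeff g (k - s) ^ (q ^ s) else 0)"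
proof -
  have "coeff (monom u s \<star> g) k = (\<Sum>i\<le>k. if i = s then u * coeff g (k - s) ^ (q ^ s) else 0)"
    unfolding coeff_tmul by (rule sum.cong) (auto simp: coeff_monom)
  then show ?thesis by simp
qed

lemma coeff_tmul_monom_right:
  "coeff (g \<star> monom u s) k = (if s \<le> k then coeff g (k - s) * u ^ (q ^ (k - s)) else 0)"
proof -
  have "coeff (g \<star> monom u s) k
      = (\<Sum>i\<le>k. if i = k - s \<and> s \<le> k then coeff g i * u ^ (q ^ i) else 0)"
    unfolding coeff_tmul by (rule sum.cong) (auto simp: coeff_monom)
  then show ?thesis by (simp add: sum.delta)
qed

lemma tmul_const_left: "[:c:] \<star> g = smult c g"
  using coeff_tmul_monom_left[of c 0 g] by (intro poly_eqI) (simp add: monom_0)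

lemma tmul_one_left [simp]: "1 \<star> g = g"
  using tmul_const_left[of 1 g] by (simp add: one_pCons)

lemma tmul_one_right [simp]: "g \<star> 1 = g"
  using coeff_tmul_monom_right[of g 1 0] by (intro poly_eqI) (simp add: monom_0 one_pCons)

lemma tmul_assoc: "(f \<star> g) \<star> h = f \<star> (g \<star> h)"
proof (rule poly_eqI)
  fix m
  let ?T = "\<lambda>i j. coeff f i * coeff g j ^ (q ^ i) * coeff h (m - i - j) ^ (q ^ (i + j))"
  have "coeff ((f \<star> g) \<star> h) m
      = (\<Sum>k\<le>m. \<Sum>i\<le>k. coeff f i * coeff g (k - i) ^ (q ^ i) * coeff h (m - k) ^ (q ^ k))"
    by (simp add: coeff_tmul sum_distrib_right)
  also have "\<dots> = (\<Sum>k\<le>m. \<Sum>i\<le>k. ?T i (k - i))"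
    by (intro sum.cong refl) auto
  also have "\<dots> = (\<Sum>(i, j)\<in>{(i, j). i + j \<le> m}. ?T i j)"
    by (rule sum.triangle_reindex_eq[symmetric])
  also have "\<dots> = (\<Sum>i\<le>m. \<Sum>j\<le>m - i. ?T i j)"
    by (simp add: sum.Sigma) (intro sum.cong; auto)
  also have "\<dots> = coeff (f \<star> (g \<star> h)) m"
    by (simp add: coeff_tmul frobenius_sum sum_distrib_left power_mult_distrib power_add
        power_mult mult.assoc) (simp add: mult.commute flip: power_mult)
  finally show "coeff ((f \<star> g) \<star> h) m = coeff (f \<star> (g \<star> h)) m" .
qed

lemma coeff_tmul_above_degree: "degree f + degree g < k \<Longrightarrow> coeff (f \<star> g) k = 0"
  unfolding coeff_tmul
proof (intro sum.neutral ballI)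
  fix i assume "degree f + degree g < k" "i \<in> {..k}"
  then have "degree f < i \<or> degree g < k - i" by auto
  then show "coeff f i * coeff g (k - i) ^ q ^ i = 0" by (auto simp: coeff_eq_0)
qed

lemma coeff_tmul_degree:
  "coeff (f \<star> g) (degree f + degree g) = lead_coeff f * lead_coeff g ^ (q ^ degree f)"
proof -
  have "coeff (f \<star> g) (degree f + degree g)
      = (\<Sum>i\<le>degree f + degree g.
          if i = degree f then lead_coeff f * lead_coeff g ^ (q ^ degree f) else 0)"
    unfolding coeff_tmul
    by (intro sum.cong refl) (auto simp: coeff_eq_0 linorder_neq_iff)
  then show ?thesis by simp
qed

lemma Fq_0 [simp]: "(0::'k) \<in> Fq q"
  by (simp add: Fq_def)

lemma Fq_add: "x \<in> Fq q \<Longrightarrow> y \<in> Fq q \<Longrightarrow> (x + y :: 'k) \<in> Fq q"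
  by (simp add: Fq_def power_q_add)

lemma Fq_mult: "x \<in> Fq q \<Longrightarrow> y \<in> Fq q \<Longrightarrow> (x * y :: 'k) \<in> Fq q"
  by (simp add: Fq_def power_mult_distrib)

lemma Fq_sum: "(\<And>x. x \<in> S \<Longrightarrow> f x \<in> Fq q) \<Longrightarrow> (sum f S :: 'k) \<in> Fq q"
  by (induction S rule: infinite_finite_induct) (auto intro: Fq_add)

lemma Aring_mult: "(a::'k poly) \<in> Aring q \<Longrightarrow> b \<in> Aring q \<Longrightarrow> a * b \<in> Aring q"
  by (auto simp: Aring_def coeff_mult intro!: Fq_sum Fq_mult)

lemma Aring_smult: "c \<in> Fq q \<Longrightarrow> (a::'k poly) \<in> Aring q \<Longrightarrow> smult c a \<in> Aring q"
  by (simp add: Aring_def Fq_mult)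

lemma Aring_pCons_iff: "pCons (c::'k) a \<in> Aring q \<longleftrightarrow> c \<in> Fq q \<and> a \<in> Aring q"
  by (auto simp: Aring_def coeff_pCons split: nat.splits)

lemma Aring_0 [simp]: "(0::'k poly) \<in> Aring q"
  by (simp add: Aring_def)

lemma Aring_1 [simp]: "(1::'k poly) \<in> Aring q"
  by (simp add: Aring_def coeff_1 Fq_def q_pos)

lemma Aring_t [simp]: "[:0, 1::'k:] \<in> Aring q"
  by (simp add: Aring_pCons_iff Fq_def q_pos)

lemma lin_ext_tmul_right: "a \<in> Aring q \<Longrightarrow> f \<star> lin_ext E a = lin_ext (\<lambda>i. f \<star> E i) a"
  by (simp add: lin_ext_def tmul_sum_right tmul_smult_right Aring_def)

lemma dm_eval_t [simp]: "dm_eval q (f::'k poly) [:0, 1:] = f"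
  by (simp add: dm_eval_eq_lin_ext)

lemma dm_eval_zero [simp]: "dm_eval q f 0 = 0"
  by (simp add: dm_eval_eq_lin_ext)

lemma dm_eval_one [simp]: "dm_eval q f 1 = 1"
  by (simp add: dm_eval_eq_lin_ext one_pCons lin_ext_const)

lemma dm_eval_add: "dm_eval q f (a + b) = dm_eval q f a + dm_eval q f b"
  by (simp add: dm_eval_eq_lin_ext lin_ext_add)

lemma dm_eval_smult: "dm_eval q f (smult c a) = smult c (dm_eval q f a)"
  by (simp add: dm_eval_eq_lin_ext lin_ext_smult)

lemma dm_eval_pCons: "a \<in> Aring q \<Longrightarrow> dm_eval q f (pCons c a) = [:c:] + f \<star> dm_eval q f a"
  by (simp add: dm_eval_eq_lin_ext lin_ext_pCons lin_ext_tmul_right)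

lemma dm_eval_mult:
  "a \<in> Aring q \<Longrightarrow> b \<in> Aring q \<Longrightarrow> dm_eval q f (a * b) = dm_eval q f a \<star> dm_eval q f b"
proof (induction a rule: pCons_induct)
  case (pCons c a)
  then have a: "a \<in> Aring q" and ab: "a * b \<in> Aring q"
    by (auto simp: Aring_pCons_iff Aring_mult)
  have "dm_eval q f (pCons c a * b) = smult c (dm_eval q f b) + f \<star> dm_eval q f (a * b)"
    using ab by (simp add: dm_eval_add dm_eval_smult dm_eval_pCons)
  also have "\<dots> = dm_eval q f (pCons c a) \<star> dm_eval q f b"
    using pCons a by (simp add: dm_eval_pCons tmul_add_left tmul_const_left tmul_assoc)
  finally show ?case .
qed simp

subsection \<open>Biderivations\<close>

text \<open>The Leibniz rule for \<open>t \<cdot> a\<close> together with \<open>\<epsilon> c = 0\<close> for constants: by Horner's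
  scheme it determines \<open>\<epsilon>\<close> on \<open>A\<close> from \<open>\<epsilon> t\<close>.\<close>
definition bider_rec :: "'k poly \<Rightarrow> 'k poly \<Rightarrow> ('k poly \<Rightarrow> 'k poly) \<Rightarrow> bool" where
  "bider_rec \<phi> \<psi> \<epsilon> \<longleftrightarrow> \<epsilon> 0 = 0 \<and>
     (\<forall>c\<in>Fq q. \<forall>a\<in>Aring q. \<epsilon> (pCons c a) = \<psi> \<star> \<epsilon> a + \<epsilon> [:0, 1:] \<star> dm_eval q \<phi> a)"

lemma bider_rec_unique:
  assumes "bider_rec \<phi> \<psi> \<epsilon>" "bider_rec \<phi> \<psi> \<epsilon>'" "\<epsilon> [:0, 1:] = \<epsilon>' [:0, 1:]" "a \<in> Aring q"
  shows "\<epsilon> a = \<epsilon>' a"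
  using assms(4)
proof (induction a rule: pCons_induct)
  case (pCons c a)
  then have "c \<in> Fq q" "a \<in> Aring q" by (auto simp: Aring_pCons_iff)
  with pCons assms(1-3) show ?case by (simp add: bider_rec_def)
qed (use assms(1,2) in \<open>simp add: bider_rec_def\<close>)

lemma biderivation_imp_bider_rec:
  assumes "biderivation q \<phi> \<psi> \<delta>"
  shows "bider_rec \<phi> \<psi> \<delta>"
proof -
  have add: "\<And>a b. a \<in> Aring q \<Longrightarrow> b \<in> Aring q \<Longrightarrow> \<delta> (a + b) = \<delta> a + \<delta> b"
    and smult: "\<And>c a. c \<in> Fq q \<Longrightarrow> a \<in> Aring q \<Longrightarrow> \<delta> (smult c a) = smult c (\<delta> a)"
    and leibniz: "\<And>a b. a \<in> Aring q \<Longrightarrow> b \<in> Aring q \<Longrightarrow>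
        \<delta> (a * b) = dm_eval q \<psi> a \<star> \<delta> b + \<delta> a \<star> dm_eval q \<phi> b"
    using assms by (auto simp: biderivation_def)
  have "\<delta> 0 = \<delta> 0 + \<delta> 0" using add[of 0 0] by simp
  then have zero: "\<delta> 0 = 0" by (simp only: add_cancel_right_right)
  have "\<delta> 1 = \<delta> 1 + \<delta> 1" using leibniz[of 1 1] by simp
  then have one: "\<delta> 1 = 0" by (simp only: add_cancel_right_right)
  have "\<delta> (pCons c a) = \<psi> \<star> \<delta> a + \<delta> [:0, 1:] \<star> dm_eval q \<phi> a"
    if c: "c \<in> Fq q" and a: "a \<in> Aring q" for c a
  proof -
    have "pCons c a = smult c 1 + [:0, 1:] * a" by (simp add: one_pCons)
    then have "\<delta> (pCons c a) = \<delta> (smult c 1) + \<delta> ([:0, 1:] * a)"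
      using c a by (simp only: add Aring_smult Aring_mult Aring_1 Aring_t)
    then show ?thesis
      using smult[OF c, of 1] leibniz[of "[:0, 1:]" a] a one by simp
  qed
  with zero show ?thesis by (simp add: bider_rec_def)
qed

lemma bider_rec_imp_biderivation:
  assumes rec: "bider_rec \<phi> \<psi> \<epsilon>"
    and add: "\<And>a b. a \<in> Aring q \<Longrightarrow> b \<in> Aring q \<Longrightarrow> \<epsilon> (a + b) = \<epsilon> a + \<epsilon> b"
    and smult: "\<And>c a. c \<in> Fq q \<Longrightarrow> a \<in> Aring q \<Longrightarrow> \<epsilon> (smult c a) = smult c (\<epsilon> a)"
  shows "biderivation q \<phi> \<psi> \<epsilon>"
  unfolding biderivation_def
proof (intro conjI ballI add smult)
  fix a b :: "'k poly" assume a: "a \<in> Aring q" and b: "b \<in> Aring q"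
  from a show "\<epsilon> (a * b) = dm_eval q \<psi> a \<star> \<epsilon> b + \<epsilon> a \<star> dm_eval q \<phi> b"
  proof (induction a rule: pCons_induct)
    case (pCons c a)
    then have c: "c \<in> Fq q" and a: "a \<in> Aring q" by (auto simp: Aring_pCons_iff)
    have ab: "a * b \<in> Aring q" using a b by (simp add: Aring_mult)
    have "pCons c a * b = smult c b + pCons 0 (a * b)" by simp
    moreover have "smult c b \<in> Aring q" "pCons 0 (a * b) \<in> Aring q"
      using c b ab by (simp_all add: Aring_smult Aring_pCons_iff)
    ultimately have "\<epsilon> (pCons c a * b) = smult c (\<epsilon> b) + \<epsilon> (pCons 0 (a * b))"
      using add smult[OF c b] by simp
    also have "\<dots> = smult c (\<epsilon> b) + \<psi> \<star> \<epsilon> (a * b) + \<epsilon> [:0, 1:] \<star> dm_eval q \<phi> (a * b)"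
      using rec ab by (simp add: bider_rec_def)
    also have "\<dots> = smult c (\<epsilon> b) + \<psi> \<star> (dm_eval q \<psi> a \<star> \<epsilon> b + \<epsilon> a \<star> dm_eval q \<phi> b)
        + \<epsilon> [:0, 1:] \<star> (dm_eval q \<phi> a \<star> dm_eval q \<phi> b)"
      using pCons.IH a b by (simp add: dm_eval_mult)
    also have "\<dots> = ([:c:] + \<psi> \<star> dm_eval q \<psi> a) \<star> \<epsilon> b
        + (\<psi> \<star> \<epsilon> a + \<epsilon> [:0, 1:] \<star> dm_eval q \<phi> a) \<star> dm_eval q \<phi> b"
      by (simp add: tmul_add_left tmul_add_right tmul_const_left tmul_assoc algebra_simps)
    also have "\<dots> = dm_eval q \<psi> (pCons c a) \<star> \<epsilon> b + \<epsilon> (pCons c a) \<star> dm_eval q \<phi> b"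
      using rec a c by (simp add: bider_rec_def dm_eval_pCons)
    finally show ?case .
  qed (use rec in \<open>simp add: bider_rec_def\<close>)
qed

lemma bider_rec_inner: "bider_rec \<phi> \<psi> (\<lambda>a. U \<star> dm_eval q \<phi> a - dm_eval q \<psi> a \<star> U)"
  unfolding bider_rec_def
proof (intro conjI ballI)
  fix c :: 'k and a :: "'k poly" assume c: "c \<in> Fq q" and a: "a \<in> Aring q"
  have "U \<star> [:c:] = smult c U"
    using tmul_smult_right[OF c, of U 1] by simp
  with a show "U \<star> dm_eval q \<phi> (pCons c a) - dm_eval q \<psi> (pCons c a) \<star> U
      = \<psi> \<star> (U \<star> dm_eval q \<phi> a - dm_eval q \<psi> a \<star> U)
        + (U \<star> dm_eval q \<phi> [:0, 1:] - dm_eval q \<psi> [:0, 1:] \<star> U) \<star> dm_eval q \<phi> a"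
    by (simp add: dm_eval_pCons tmul_add_left tmul_add_right tmul_diff_left tmul_diff_right
        tmul_const_left tmul_assoc)
qed (simp add: dm_eval_eq_lin_ext)

lemma bider_rec_diff:
  "bider_rec \<phi> \<psi> \<epsilon> \<Longrightarrow> bider_rec \<phi> \<psi> \<epsilon>' \<Longrightarrow> bider_rec \<phi> \<psi> (\<lambda>a. \<epsilon> a - \<epsilon>' a)"
  unfolding bider_rec_def by (auto simp: tmul_diff_left tmul_diff_right)

lemma bider_rec_tmul_left: "bider_rec \<phi> \<psi> \<epsilon> \<Longrightarrow> bider_rec \<phi> \<psi> (\<lambda>a. \<psi> \<star> \<epsilon> a)"
  unfolding bider_rec_def by (auto simp: tmul_add_right tmul_assoc)

fun bider_on_powers :: "'k poly \<Rightarrow> 'k poly \<Rightarrow> 'k poly \<Rightarrow> nat \<Rightarrow> 'k poly" where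
  "bider_on_powers \<phi> \<psi> D 0 = 0"
| "bider_on_powers \<phi> \<psi> D (Suc i) = \<psi> \<star> bider_on_powers \<phi> \<psi> D i + D \<star> tpow q \<phi> i"

lemma biderivation_exists:
  fixes \<phi> \<psi> D :: "'k poly"
  shows "\<exists>\<delta>. biderivation q \<phi> \<psi> \<delta> \<and> \<delta> [:0, 1:] = D"
proof (intro exI conjI)
  let ?\<delta> = "lin_ext (bider_on_powers \<phi> \<psi> D)"
  show t: "?\<delta> [:0, 1:] = D" by simp
  show "biderivation q \<phi> \<psi> ?\<delta>"
  proof (rule bider_rec_imp_biderivation)
    show "bider_rec \<phi> \<psi> ?\<delta>"
      unfolding bider_rec_def t
      by (simp add: lin_ext_pCons lin_ext_add_fun lin_ext_tmul_right dm_eval_eq_lin_ext)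
  qed (simp_all add: lin_ext_add lin_ext_smult)
qed

definition inner_values :: "'k poly \<Rightarrow> 'k poly \<Rightarrow> 'k poly set" where
  "inner_values \<phi> \<psi> = range (\<lambda>U. U \<star> \<phi> - \<psi> \<star> U)"

lemma inner_values_inner [simp]: "U \<star> \<phi> - \<psi> \<star> U \<in> inner_values \<phi> \<psi>"
  by (simp add: inner_values_def)

lemma inner_values_zero [simp]: "0 \<in> inner_values \<phi> \<psi>"
  using inner_values_inner[of 0] by simp

lemma inner_values_add:
  assumes "D \<in> inner_values \<phi> \<psi>" "D' \<in> inner_values \<phi> \<psi>"
  shows "D + D' \<in> inner_values \<phi> \<psi>"
proof -
  obtain U U' where "D = U \<star> \<phi> - \<psi> \<star> U" "D' = U' \<star> \<phi> - \<psi> \<star> U'"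
    using assms by (auto simp: inner_values_def)
  then have "D + D' = (U + U') \<star> \<phi> - \<psi> \<star> (U + U')"
    by (simp add: tmul_add_left tmul_add_right)
  then show ?thesis by (simp add: inner_values_def)
qed

lemma ext_eq_iff_inner_values:
  assumes "bider_rec \<phi> \<psi> \<epsilon>" "bider_rec \<phi> \<psi> \<epsilon>'"
  shows "ext_eq q \<phi> \<psi> \<epsilon> \<epsilon>' \<longleftrightarrow> \<epsilon> [:0, 1:] - \<epsilon>' [:0, 1:] \<in> inner_values \<phi> \<psi>"
proof
  assume "ext_eq q \<phi> \<psi> \<epsilon> \<epsilon>'"
  then obtain U where "\<forall>a\<in>Aring q. \<epsilon> a - \<epsilon>' a = U \<star> dm_eval q \<phi> a - dm_eval q \<psi> a \<star> U"
    by (auto simp: ext_eq_def inner_biderivation_def)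
  then show "\<epsilon> [:0, 1:] - \<epsilon>' [:0, 1:] \<in> inner_values \<phi> \<psi>"
    by (auto simp: inner_values_def)
next
  assume "\<epsilon> [:0, 1:] - \<epsilon>' [:0, 1:] \<in> inner_values \<phi> \<psi>"
  then obtain U where U: "\<epsilon> [:0, 1:] - \<epsilon>' [:0, 1:] = U \<star> \<phi> - \<psi> \<star> U"
    by (auto simp: inner_values_def)
  have "\<epsilon> a - \<epsilon>' a = U \<star> dm_eval q \<phi> a - dm_eval q \<psi> a \<star> U" if "a \<in> Aring q" for a
    using bider_rec_unique[OF bider_rec_diff[OF assms] bider_rec_inner _ that] U by simp
  then show "ext_eq q \<phi> \<psi> \<epsilon> \<epsilon>'"
    by (auto simp: ext_eq_def inner_biderivation_def)
qed

lemma tp_eval_tmul_monom: "tp_eval q (monom b l \<star> p) x = b * (tp_eval q p x) ^ (q ^ l)"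
proof -
  define N where "N = Suc (degree p)"
  have "degree (monom b l \<star> p) < N + l"
    by (rule degree_lessI) (auto simp: coeff_tmul_monom_left coeff_eq_0 N_def)
  then have "tp_eval q (monom b l \<star> p) x
      = (\<Sum>k<N + l. if l \<le> k then b * coeff p (k - l) ^ (q ^ l) * x ^ (q ^ k) else 0)"
    by (auto simp: tp_eval_eq_sum coeff_tmul_monom_left intro!: sum.cong)
  also have "\<dots> = (\<Sum>k\<in>{l..<N + l}. b * coeff p (k - l) ^ (q ^ l) * x ^ (q ^ k))"
    by (rule sum.mono_neutral_cong_right) auto
  also have "\<dots> = (\<Sum>i<N. b * coeff p i ^ (q ^ l) * x ^ (q ^ (i + l)))"
    using sum.shift_bounds_nat_ivl[of "\<lambda>k. b * coeff p (k - l) ^ (q ^ l) * x ^ (q ^ k)" 0 l N]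
    by (simp add: atLeast0LessThan)
  also have "\<dots> = b * (\<Sum>i<N. coeff p i * x ^ (q ^ i)) ^ (q ^ l)"
    by (simp add: frobenius_sum sum_distrib_left power_mult_distrib power_add power_mult
        algebra_simps flip: power_mult)
  also have "\<dots> = b * (tp_eval q p x) ^ (q ^ l)"
    by (simp add: tp_eval_eq_sum[of p N] N_def del: sum.lessThan_Suc)
  finally show ?thesis .
qed

lemma coeff_tmul_tau_vec:
  "coeff (f \<star> tau_vec n c) k = mat_tp_eval q n (left_mult_matrix f) c k"
proof -
  define h where "h j = coeff f (k - j) * (if j < n then c j else 0) ^ (q ^ (k - j))" for j
  have "coeff (f \<star> tau_vec n c) k = (\<Sum>i<Suc k. h (Suc k - Suc i))"
    unfolding coeff_tmul lessThan_Suc_atMost[symmetric]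
    by (rule sum.cong) (auto simp: h_def coeff_tau_vec)
  also have "\<dots> = (\<Sum>j<Suc k. h j)"
    by (rule sum.nat_diff_reindex)
  also have "\<dots> = (\<Sum>j\<in>{..<Suc k} \<inter> {..<n}. coeff f (k - j) * c j ^ (q ^ (k - j)))"
    by (subst sum.inter_restrict) (auto simp: h_def intro: sum.cong)
  also have "\<dots> = (\<Sum>j\<in>{..<n} \<inter> {..<Suc k}. coeff f (k - j) * c j ^ (q ^ (k - j)))"
    by (simp only: Int_commute)
  also have "\<dots> = mat_tp_eval q n (left_mult_matrix f) c k"
    by (subst sum.inter_restrict)
       (auto simp: mat_tp_eval_def left_mult_matrix_def tp_eval_monom less_Suc_eq_le intro!: sum.cong)
  finally show ?thesis .
qed

lemma tau_vec_left_mult_matrix: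
  "tau_vec (n + degree f) (mat_tp_eval q n (left_mult_matrix f) c) = f \<star> tau_vec n c"
proof (rule poly_eqI)
  fix k
  have "coeff (f \<star> tau_vec n c) k = 0" if "n + degree f \<le> k"
    unfolding coeff_tmul
  proof (intro sum.neutral ballI)
    fix i assume "i \<in> {..k}"
    with that show "coeff f i * coeff (tau_vec n c) (k - i) ^ q ^ i = 0"
      by (cases "i \<le> degree f") (auto simp: coeff_tau_vec coeff_eq_0)
  qed
  then show "coeff (tau_vec (n + degree f) (mat_tp_eval q n (left_mult_matrix f) c)) k
      = coeff (f \<star> tau_vec n c) k"
    by (auto simp: coeff_tau_vec coeff_tmul_tau_vec)
qed

end

section \<open>Division by inner biderivations\<close>

locale drinfeld_pair = twisted_poly q for q :: nat +
  fixes \<phi> \<psi> :: "'k::field poly" and \<theta> :: 'k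
  assumes coeff_phi_0: "coeff \<phi> 0 = \<theta>" and coeff_psi_0: "coeff \<psi> 0 = \<theta>"
    and degree_psi_less: "degree \<psi> < degree \<phi>"
begin

abbreviation n :: nat where
  "n \<equiv> degree \<phi>"

lemma n_pos: "0 < n"
  using degree_psi_less by simp

lemma lead_coeff_phi_nonzero: "lead_coeff \<phi> \<noteq> 0"
  using n_pos by auto

lemma degree_inner_ge:
  assumes "U \<noteq> 0"
  shows "degree U + n \<le> degree (U \<star> \<phi> - \<psi> \<star> U)"
proof (rule le_degree)
  have "coeff (\<psi> \<star> U) (degree U + n) = 0"
    by (rule coeff_tmul_above_degree) (use degree_psi_less in simp)
  moreover have "coeff (U \<star> \<phi>) (degree U + n) = lead_coeff U * lead_coeff \<phi> ^ (q ^ degree U)"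
    by (rule coeff_tmul_degree)
  ultimately show "coeff (U \<star> \<phi> - \<psi> \<star> U) (degree U + n) \<noteq> 0"
    using assms lead_coeff_phi_nonzero by simp
qed

lemma inner_values_degree_less:
  assumes "D \<in> inner_values \<phi> \<psi>" "degree D < n"
  shows "D = 0"
proof -
  obtain U where D: "D = U \<star> \<phi> - \<psi> \<star> U"
    using assms(1) by (auto simp: inner_values_def)
  then have "U = 0"
    using degree_inner_ge assms(2) by fastforce
  with D show ?thesis by simp
qed

text \<open>The witness is \<open>U = monom u s\<close> with \<open>s = degree D - n\<close> and
  \<open>u = lead_coeff D / lead_coeff \<phi> ^ q ^ s\<close>: then \<open>U \<star> \<phi>\<close> has the leading term of \<open>D\<close>,
  while \<open>\<psi> \<star> U\<close> has smaller degree.\<close>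
lemma cancel_leading_term:
  assumes "n \<le> degree D"
  shows "\<exists>U. degree (D - (U \<star> \<phi> - \<psi> \<star> U)) < degree D"
proof
  define m s where "m = degree D" and "s = degree D - n"
  define u where "u = lead_coeff D / lead_coeff \<phi> ^ (q ^ s)"
  have ms: "m = s + n" using assms by (simp add: m_def s_def)
  show "degree (D - (monom u s \<star> \<phi> - \<psi> \<star> monom u s)) < degree D"
  proof (rule degree_lessI)
    show "D - (monom u s \<star> \<phi> - \<psi> \<star> monom u s) \<noteq> 0 \<or> 0 < degree D"
      using assms n_pos by simp
    show "\<forall>k\<ge>degree D. coeff (D - (monom u s \<star> \<phi> - \<psi> \<star> monom u s)) k = 0"
    proof (intro allI impI)
      fix k assume k: "degree D \<le> k"
      have "coeff \<psi> (k - s) = 0" using k ms m_def degree_psi_less by (intro coeff_eq_0) simp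
      moreover have "coeff D k = u * coeff \<phi> (k - s) ^ (q ^ s)"
      proof (cases "k = m")
        case True
        then show ?thesis using ms lead_coeff_phi_nonzero by (simp add: u_def m_def)
      next
        case False
        then show ?thesis using k ms m_def by (simp add: coeff_eq_0)
      qed
      ultimately show "coeff (D - (monom u s \<star> \<phi> - \<psi> \<star> monom u s)) k = 0"
        using k ms m_def by (simp add: coeff_tmul_monom_left coeff_tmul_monom_right)
    qed
  qed
qed

lemma division_by_inner_values: "\<exists>D'. degree D' < n \<and> D - D' \<in> inner_values \<phi> \<psi>"
proof (induction "degree D" arbitrary: D rule: less_induct)
  case less
  show ?case
  proof (cases "degree D < n")
    case True
    then show ?thesis by (intro exI[of _ D]) simp
  next
    case False
    then obtain U where U: "degree (D - (U \<star> \<phi> - \<psi> \<star> U)) < degree D"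
      using cancel_leading_term by fastforce
    with less obtain D' where "degree D' < n" "D - (U \<star> \<phi> - \<psi> \<star> U) - D' \<in> inner_values \<phi> \<psi>"
      by blast
    moreover have "D - D' = (D - (U \<star> \<phi> - \<psi> \<star> U) - D') + (U \<star> \<phi> - \<psi> \<star> U)"
      by simp
    ultimately show ?thesis
      by (metis inner_values_add inner_values_inner)
  qed
qed

subsection \<open>The matrix of multiplication by \<open>t\<close>\<close>

definition theta_block :: "(nat \<Rightarrow> nat \<Rightarrow> 'k poly) \<Rightarrow> bool" where
  "theta_block R \<longleftrightarrow> (\<forall>k j. j < n \<longrightarrow> coeff (R k j) 0 = (if k = j then \<theta> else 0)) \<and>
     (\<forall>j<n. R 0 j = (if j = 0 then [:\<theta>:] else 0))"

lemma theta_block_left_mult_matrix: "theta_block (left_mult_matrix \<psi>)"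
  by (auto simp: theta_block_def left_mult_matrix_def coeff_psi_0 monom_0)

lemma t_module_theta_block: "theta_block P \<Longrightarrow> t_module \<theta> n P"
  unfolding t_module_def nilpotent_mat_def
  by (intro exI[of _ "\<lambda>_ _. 0"] conjI exI[of _ 1]) (auto simp: theta_block_def kmatmul_def)

definition top_quotient :: "nat \<Rightarrow> (nat \<Rightarrow> nat \<Rightarrow> 'k poly) \<Rightarrow> nat \<Rightarrow> 'k poly" where
  "top_quotient N R j = smult (inverse (lead_coeff \<phi> ^ q ^ (N - n))) (R N j)"

text \<open>Row \<open>N\<close> of \<open>R\<close> evaluated at \<open>c\<close> and divided by \<open>lead_coeff \<phi> ^ q ^ s\<close>,
  \<open>s = N - n\<close>, is the \<open>u\<close> for which subtracting \<open>monom u s \<star> \<phi> - \<psi> \<star> monom u s\<close>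
  removes the \<open>\<tau>\<^sup>N\<close>-coordinate. Since \<open>u ^ q ^ m\<close> is again \<open>K{\<tau>}\<close>-linear in \<open>c\<close>,
  the corrected lower coordinates are given by a matrix.\<close>
definition reduce_top :: "nat \<Rightarrow> (nat \<Rightarrow> nat \<Rightarrow> 'k poly) \<Rightarrow> nat \<Rightarrow> nat \<Rightarrow> 'k poly" where
  "reduce_top N R k j =
     (if N - n \<le> k then R k j
        - smult (coeff \<phi> (k - (N - n)) ^ q ^ (N - n)) (top_quotient N R j)
        + monom (coeff \<psi> (k - (N - n))) (k - (N - n)) \<star> top_quotient N R j
      else R k j)"

lemma theta_block_reduce_top:
  assumes "n \<le> N" "theta_block R"
  shows "theta_block (reduce_top N R)"
proof -
  have "coeff (top_quotient N R j) 0 = 0" if "j < n" for j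
    using assms that by (simp add: theta_block_def top_quotient_def)
  with assms(2) show ?thesis
    by (auto simp: theta_block_def reduce_top_def coeff_tmul_monom_left monom_0 tmul_const_left
        coeff_phi_0 coeff_psi_0)
qed

lemma mat_tp_eval_reduce_top:
  fixes N :: nat and R :: "nat \<Rightarrow> nat \<Rightarrow> 'k poly" and c :: "nat \<Rightarrow> 'k"
  defines "u \<equiv> inverse (lead_coeff \<phi> ^ q ^ (N - n)) * mat_tp_eval q n R c N"
  shows "mat_tp_eval q n (reduce_top N R) c k =
    (if N - n \<le> k then mat_tp_eval q n R c k - coeff \<phi> (k - (N - n)) ^ q ^ (N - n) * u
        + coeff \<psi> (k - (N - n)) * u ^ q ^ (k - (N - n))
     else mat_tp_eval q n R c k)"
proof (cases "N - n \<le> k")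
  case True
  define w where "w j = tp_eval q (top_quotient N R j) (c j)" for j
  have u: "u = (\<Sum>j<n. w j)"
    by (simp add: u_def w_def top_quotient_def tp_eval_smult mat_tp_eval_def sum_distrib_left)
  have "mat_tp_eval q n (reduce_top N R) c k = (\<Sum>j<n. tp_eval q (R k j) (c j)
      - coeff \<phi> (k - (N - n)) ^ q ^ (N - n) * w j + coeff \<psi> (k - (N - n)) * w j ^ q ^ (k - (N - n)))"
    using True
    by (simp add: mat_tp_eval_def reduce_top_def tp_eval_add tp_eval_diff tp_eval_smult
        tp_eval_tmul_monom w_def)
  with True show ?thesis
    by (simp add: mat_tp_eval_def u sum.distrib sum_subtractf sum_distrib_left frobenius_sum)
qed (simp add: mat_tp_eval_def reduce_top_def)

lemma tau_vec_reduce_top: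
  assumes "n \<le> N"
  shows "tau_vec (Suc N) (mat_tp_eval q n R c) - tau_vec N (mat_tp_eval q n (reduce_top N R) c)
    \<in> inner_values \<phi> \<psi>"
proof -
  define s where "s = N - n"
  define u where "u = inverse (lead_coeff \<phi> ^ q ^ s) * mat_tp_eval q n R c N"
  have Ns: "N = s + n" using assms by (simp add: s_def)
  have reduced: "mat_tp_eval q n (reduce_top N R) c k = (if s \<le> k then mat_tp_eval q n R c k
      - coeff \<phi> (k - s) ^ q ^ s * u + coeff \<psi> (k - s) * u ^ q ^ (k - s)
      else mat_tp_eval q n R c k)" for k
    unfolding u_def s_def by (rule mat_tp_eval_reduce_top)
  have "tau_vec (Suc N) (mat_tp_eval q n R c) - tau_vec N (mat_tp_eval q n (reduce_top N R) c)
      = monom u s \<star> \<phi> - \<psi> \<star> monom u s"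
  proof (rule poly_eqI)
    fix k
    consider "k < N" | "k = N" | "N < k" by linarith
    then show "coeff (tau_vec (Suc N) (mat_tp_eval q n R c)
        - tau_vec N (mat_tp_eval q n (reduce_top N R) c)) k
      = coeff (monom u s \<star> \<phi> - \<psi> \<star> monom u s) k"
    proof cases
      case 1
      then show ?thesis
        by (simp add: coeff_tau_vec coeff_tmul_monom_left coeff_tmul_monom_right reduced)
    next
      case 2
      then have "coeff \<phi> (k - s) = lead_coeff \<phi>" "coeff \<psi> (k - s) = 0"
        using Ns degree_psi_less by (simp_all add: coeff_eq_0)
      with 2 show ?thesis
        using Ns lead_coeff_phi_nonzero
        by (simp add: coeff_tau_vec coeff_tmul_monom_left coeff_tmul_monom_right u_def)
    next
      case 3
      then have "coeff \<phi> (k - s) = 0" "coeff \<psi> (k - s) = 0"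
        using Ns degree_psi_less by (simp_all add: coeff_eq_0)
      with 3 show ?thesis
        using Ns by (simp add: coeff_tau_vec coeff_tmul_monom_left coeff_tmul_monom_right)
    qed
  qed
  then show ?thesis by simp
qed

lemma reduce_to_rank:
  assumes "n \<le> N" "theta_block R"
  shows "\<exists>R'. theta_block R' \<and>
    (\<forall>c. tau_vec N (mat_tp_eval q n R c) - tau_vec n (mat_tp_eval q n R' c) \<in> inner_values \<phi> \<psi>)"
  using assms
proof (induction N arbitrary: R rule: dec_induct)
  case base
  then show ?case by auto
next
  case (step N)
  let ?R = "reduce_top N R"
  obtain R' where R': "theta_block R'"
    and IH: "\<forall>c. tau_vec N (mat_tp_eval q n ?R c) - tau_vec n (mat_tp_eval q n R' c)
      \<in> inner_values \<phi> \<psi>"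
    using step theta_block_reduce_top by blast
  have "tau_vec (Suc N) (mat_tp_eval q n R c) - tau_vec n (mat_tp_eval q n R' c)
      \<in> inner_values \<phi> \<psi>" for c
    using inner_values_add[OF tau_vec_reduce_top[OF step(1), of R c] IH[rule_format, of c]] by simp
  with R' show ?case by blast
qed

lemma ext_eq_tau_vec_imp_eq:
  assumes "biderivation q \<phi> \<psi> \<delta>" "\<delta> [:0, 1:] = tau_vec n c"
    and "biderivation q \<phi> \<psi> \<delta>'" "\<delta>' [:0, 1:] = tau_vec n c'"
    and "ext_eq q \<phi> \<psi> \<delta> \<delta>'" "i < n"
  shows "c i = c' i"
proof -
  have "tau_vec n c - tau_vec n c' \<in> inner_values \<phi> \<psi>"
    using assms(1-5) by (simp add: ext_eq_iff_inner_values biderivation_imp_bider_rec)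
  moreover have "degree (tau_vec n c - tau_vec n c') < n"
    using degree_diff_le_max[of "tau_vec n c" "tau_vec n c'"] degree_tau_vec_less[OF n_pos]
    by (metis le_less_trans max_less_iff_conj)
  ultimately have "tau_vec n c = tau_vec n c'"
    using inner_values_degree_less right_minus_eq by metis
  then show ?thesis
    using coeff_tau_vec[of n c i] coeff_tau_vec[of n c' i] assms(6) by simp
qed

lemma ext_class_tau_vec_representative:
  assumes "biderivation q \<phi> \<psi> \<delta>"
  shows "\<exists>c \<delta>'. biderivation q \<phi> \<psi> \<delta>' \<and> \<delta>' [:0, 1:] = tau_vec n c \<and> ext_eq q \<phi> \<psi> \<delta> \<delta>'"
proof -
  obtain D' where D': "degree D' < n" "\<delta> [:0, 1:] - D' \<in> inner_values \<phi> \<psi>"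
    using division_by_inner_values by blast
  obtain \<delta>' where \<delta>': "biderivation q \<phi> \<psi> \<delta>'" "\<delta>' [:0, 1:] = D'"
    using biderivation_exists by blast
  have "ext_eq q \<phi> \<psi> \<delta> \<delta>'"
    using D' \<delta>' assms by (simp add: ext_eq_iff_inner_values biderivation_imp_bider_rec)
  with \<delta>' D'(1) show ?thesis
    by (metis tau_vec_coeff)
qed

lemma ext_smul_t_module:
  "\<exists>P. t_module \<theta> n P \<and> P 0 0 = [:\<theta>:] \<and> (\<forall>j. 0 < j \<and> j < n \<longrightarrow> P 0 j = 0) \<and>
     (\<forall>c \<delta> \<delta>'. biderivation q \<phi> \<psi> \<delta> \<and> \<delta> [:0, 1:] = tau_vec n c \<and>
        biderivation q \<phi> \<psi> \<delta>' \<and> \<delta>' [:0, 1:] = tau_vec n (mat_tp_eval q n P c)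
        \<longrightarrow> ext_eq q \<phi> \<psi> (ext_smul q \<psi> [:0, 1:] \<delta>) \<delta>')"
proof -
  obtain P where P: "theta_block P" and reduced: "\<And>c. tau_vec (n + degree \<psi>)
      (mat_tp_eval q n (left_mult_matrix \<psi>) c) - tau_vec n (mat_tp_eval q n P c) \<in> inner_values \<phi> \<psi>"
    using reduce_to_rank[OF _ theta_block_left_mult_matrix, of "n + degree \<psi>"] by auto
  have "ext_eq q \<phi> \<psi> (ext_smul q \<psi> [:0, 1:] \<delta>) \<delta>'"
    if \<delta>: "biderivation q \<phi> \<psi> \<delta>" "\<delta> [:0, 1:] = tau_vec n c"
      and \<delta>': "biderivation q \<phi> \<psi> \<delta>'" "\<delta>' [:0, 1:] = tau_vec n (mat_tp_eval q n P c)"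
    for c \<delta> \<delta>'
  proof -
    have "bider_rec \<phi> \<psi> (ext_smul q \<psi> [:0, 1:] \<delta>)"
      unfolding ext_smul_def dm_eval_t by (intro bider_rec_tmul_left biderivation_imp_bider_rec \<delta>(1))
    moreover have "ext_smul q \<psi> [:0, 1:] \<delta> [:0, 1:] = \<psi> \<star> tau_vec n c"
      by (simp add: ext_smul_def \<delta>(2))
    ultimately show ?thesis
      using reduced[of c] \<delta>' biderivation_imp_bider_rec
      by (simp add: ext_eq_iff_inner_values tau_vec_left_mult_matrix)
  qed
  moreover have "P 0 0 = [:\<theta>:]" "\<forall>j. 0 < j \<and> j < n \<longrightarrow> P 0 j = 0"
    using P n_pos by (auto simp: theta_block_def)
  ultimately show ?thesis
    using t_module_theta_block[OF P] by blast
qed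

end

lemma CHAR_eq_prime:
  assumes "prime p" "of_nat p = (0::'a::field)"
  shows "CHAR('a) = p"
proof -
  have "CHAR('a) dvd p"
    using assms(2) by (simp add: of_nat_eq_0_iff_char_dvd)
  with assms(1) show ?thesis
    by (metis One_nat_def CHAR_not_1 prime_nat_iff)
qed

lemma drinfeld_module_coeff_0:
  assumes "drinfeld_module \<theta> f"
  shows "coeff f 0 = \<theta>"
proof -
  have kmatpow_1: "kmatpow (Suc 0) N m 0 0 = N 0 0 ^ m" for N and m :: nat
    by (induction m) (simp_all add: kmatmul_def)
  from assms show ?thesis
    by (auto simp: drinfeld_module_def t_module_def nilpotent_mat_def kmatpow_1)
qed

lemma drinfeld_rank_eq_degree: "drinfeld_rank f = degree f"
proof -
  have "{degree f |i j. i < (1::nat) \<and> j < (1::nat)} = {degree f}" by auto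
  then show ?thesis by (simp add: drinfeld_rank_def t_rank_def)
qed

theorem proposition5p1:
  fixes p q e :: nat and \<theta> :: "'k::field" and \<phi>t \<psi>t :: "'k poly" and n :: nat
  assumes "prime p" and "of_nat p = (0::'k)"
    and "e \<ge> 1" and "q = p ^ e"
    and "card (Fq q :: 'k set) = q"
    and "drinfeld_module \<theta> \<phi>t" and "drinfeld_module \<theta> \<psi>t"
    and "n = drinfeld_rank \<phi>t" and "n > drinfeld_rank \<psi>t"
  shows
    \<comment> \<open>c \<mapsto> class of the biderivation with delta(t) = sum c_i tau^i is a bijection K^n -> Ext\<close>
    "(\<forall>c::nat \<Rightarrow> 'k. \<exists>\<delta>. biderivation q \<phi>t \<psi>t \<delta> \<and> \<delta> [:0, 1:] = tau_vec n c)
     \<and> (\<forall>c c' :: nat \<Rightarrow> 'k. \<forall>\<delta> \<delta>'.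
          biderivation q \<phi>t \<psi>t \<delta> \<and> \<delta> [:0, 1:] = tau_vec n c \<and>
          biderivation q \<phi>t \<psi>t \<delta>' \<and> \<delta>' [:0, 1:] = tau_vec n c' \<and>
          ext_eq q \<phi>t \<psi>t \<delta> \<delta>' \<longrightarrow> (\<forall>i<n. c i = c' i))
     \<and> (\<forall>\<delta>. biderivation q \<phi>t \<psi>t \<delta> \<longrightarrow>
          (\<exists>c::nat \<Rightarrow> 'k. \<exists>\<delta>'. biderivation q \<phi>t \<psi>t \<delta>' \<and> \<delta>' [:0, 1:] = tau_vec n c \<and>
                ext_eq q \<phi>t \<psi>t \<delta> \<delta>'))
     \<and> (\<exists>P :: nat \<Rightarrow> nat \<Rightarrow> 'k poly.
          t_module \<theta> n P
          \<and> P 0 0 = [:\<theta>:] \<and> (\<forall>j. 0 < j \<and> j < n \<longrightarrow> P 0 j = 0)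
          \<and> (\<forall>c::nat \<Rightarrow> 'k. \<forall>\<delta> \<delta>'.
               biderivation q \<phi>t \<psi>t \<delta> \<and> \<delta> [:0, 1:] = tau_vec n c \<and>
               biderivation q \<phi>t \<psi>t \<delta>' \<and> \<delta>' [:0, 1:] = tau_vec n (mat_tp_eval q n P c)
               \<longrightarrow> ext_eq q \<phi>t \<psi>t (ext_smul q \<psi>t [:0, 1:] \<delta>) \<delta>'))"
proof -
  have "CHAR('k) = p"
    using assms(1,2) by (rule CHAR_eq_prime)
  then interpret drinfeld_pair q \<phi>t \<psi>t \<theta>
    using assms(1,4,6-9)
    by unfold_locales
       (simp_all add: freshmans_dream' drinfeld_module_coeff_0 drinfeld_rank_eq_degree)
  have n: "n = degree \<phi>t"
    using assms(8) by (simp add: drinfeld_rank_eq_degree)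
  show ?thesis
    unfolding n
    by (intro conjI allI impI biderivation_exists ext_class_tau_vec_representative
        ext_smul_t_module) (auto intro: ext_eq_tau_vec_imp_eq)
qed

end
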